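(* Let $n=2m+1\ge3$, $I\subset\{0,\dots,m\}$ nonempty, $d\in\mathbb Z$, and let $(v_i)_{i\in n\mathbb Z\pm I}$ be a $d$-face of type $I$ with associated vectors $\mu_i=v_i-\omega_i$. Then for every $i\in I$, $d\le\mu_i(j)+\mu_i(j^* )\le d+1$ for all $j\in A_i$, and $d-1\le\mu_i(j)+\mu_i(j^* )\le d$ for all $j\in B_i$, where $j^*=n+1-j$, $A_i=\{1,2,\dots,i\}\cup\{i^*,i^*+1,\dots,n\}$ and $B_i=\{i+1,i+2,\dots,n-i\}$.
   Context: For $v\in\mathbb Z^n$ write $v(j)$ for its $j$-th entry, $\Sigma v$ for the sum of its entries, $v^*$ for the vector with $v^*(j)=v(n+1-j)$, $\mathbf d=(d,\dots,d)$, and $v\ge w$ if $v(j)\ge w(j)$ for all $j$. The index set $n\mathbb Z\pm I$ is the set of integers congruent mod $n$ to an element of $I\cup(-I)$. A $d$-face of type $I$ is a family $(v_i)_{i\in n\mathbb Z\pm I}$ of vectors in $\mathbb Z^n$ with: (F1) $v_{i+n}=v_i-\mathbf 1$; (F2) $v_i\ge v_j$ whenever $i\le j$; (F3) $\Sigma v_i-\Sigma v_j=j-i$; (F4) $v_i+v_{-i}^*=\mathbf d$, for all indices $i,j$ in $n\mathbb Z\pm I$. For $i=nb+c$ with $b\in\mathbb Z$, $0\le c<n$, $\omega_i=((-1)^{(c)},0^{(n-c)})-\mathbf b$, where $(x^{(p)},y^{(q)})$ denotes $x$ repeated $p$ times followed by $y$ repeated $q$ times. *)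

theory Defs
  imports Main
begin

text \<open>Vectors in Z^n are represented as functions nat => int, with entries
  indexed by 1..n (values outside 1..n are irrelevant). Families of vectors
  are functions int => (nat => int); only indices in the index set matter.\<close>

definition idx_set :: "nat \<Rightarrow> nat set \<Rightarrow> int set" where
  "idx_set n I = {k. \<exists>i\<in>I. k mod int n = int i mod int n \<or> k mod int n = (- int i) mod int n}"

definition vsum :: "nat \<Rightarrow> (nat \<Rightarrow> int) \<Rightarrow> int" where
  "vsum n v = (\<Sum>j=1..n. v j)"

definition is_face :: "nat \<Rightarrow> int \<Rightarrow> nat set \<Rightarrow> (int \<Rightarrow> nat \<Rightarrow> int) \<Rightarrow> bool" where
  "is_face n d I v \<longleftrightarrow>
     (\<forall>i\<in>idx_set n I. \<forall>k\<in>{1..n}. v (i + int n) k = v i k - 1) \<and>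
     (\<forall>i\<in>idx_set n I. \<forall>j\<in>idx_set n I. i \<le> j \<longrightarrow> (\<forall>k\<in>{1..n}. v i k \<ge> v j k)) \<and>
     (\<forall>i\<in>idx_set n I. \<forall>j\<in>idx_set n I. vsum n (v i) - vsum n (v j) = j - i) \<and>
     (\<forall>i\<in>idx_set n I. \<forall>k\<in>{1..n}. v i k + v (- i) (n + 1 - k) = d)"

text \<open>omega_i for i = n b + c, 0 <= c < n: first c entries -1, rest 0, minus b.\<close>
definition omega :: "nat \<Rightarrow> int \<Rightarrow> nat \<Rightarrow> int" where
  "omega n i k = (if int k \<le> i mod int n then -1 else 0) - i div int n"

definition mu :: "nat \<Rightarrow> (int \<Rightarrow> nat \<Rightarrow> int) \<Rightarrow> int \<Rightarrow> nat \<Rightarrow> int" where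
  "mu n v i k = v i k - omega n i k"

end

theory Submission
  imports Defs
begin

text \<open>By (F4) at the index -i, v_i(j) + v_i(j*) = d - (v_{-i}(j) - v_i(j)). For
  0 <= i <= n - i the chain -i <= i <= n - i, with (F2) and (F1), gives
  v_i <= v_{-i} <= v_{-i+n} + 1 <= v_i + 1 entrywise, so v_i(j) + v_i(j*) is d - 1 or d.
  For 0 <= i <= m the vector omega_i has its first i entries -1 and the rest 0, so
  omega_i(j) + omega_i(j*) is -1 on A_i and 0 on B_i.\<close>

lemma uminus_mem_idx_set: "k \<in> idx_set n I \<Longrightarrow> - k \<in> idx_set n I"
  unfolding idx_set_def using mod_minus_cong[of k "int n"] by fastforce

lemma add_mem_idx_set: "k \<in> idx_set n I \<Longrightarrow> k + int n \<in> idx_set n I"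
  unfolding idx_set_def by simp

lemma of_nat_mem_idx_set: "i \<in> I \<Longrightarrow> int i \<in> idx_set n I"
  unfolding idx_set_def by blast

lemma face_mirror_sum_bounds:
  assumes face: "is_face n d I v"
    and i: "i \<in> idx_set n I" "0 \<le> i" "2 * i \<le> int n"
    and k: "k \<in> {1..n}"
  shows "d - 1 \<le> v i k + v i (n + 1 - k) \<and> v i k + v i (n + 1 - k) \<le> d"
proof -
  have neg_i: "- i \<in> idx_set n I"
    using i(1) by (rule uminus_mem_idx_set)
  have shifted: "- i + int n \<in> idx_set n I"
    using neg_i by (rule add_mem_idx_set)
  have duality: "v (- i) k + v i (n + 1 - k) = d"
    using face neg_i k unfolding is_face_def by force
  have "v i k \<le> v (- i) k"
    using face i neg_i k unfolding is_face_def by force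
  moreover have "v (- i + int n) k \<le> v i k"
    using face i shifted k unfolding is_face_def by force
  moreover have "v (- i + int n) k = v (- i) k - 1"
    using face neg_i k unfolding is_face_def by force
  ultimately show ?thesis
    using duality by linarith
qed

lemma omega_of_nat_less: "i < n \<Longrightarrow> omega n (int i) k = (if k \<le> i then -1 else 0)"
  by (simp add: omega_def)

lemma omega_mirror_sum_outer:
  assumes "2 * i < n" and "j \<in> {1..i} \<union> {n + 1 - i..n}"
  shows "omega n (int i) j + omega n (int i) (n + 1 - j) = -1"
  using assms by (auto simp: omega_of_nat_less)

lemma omega_mirror_sum_inner:
  assumes "2 * i < n" and "j \<in> {i + 1..n - i}"
  shows "omega n (int i) j + omega n (int i) (n + 1 - j) = 0"
  using assms by (auto simp: omega_of_nat_less)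

theorem lemma5p3p4:
  fixes m n :: nat and I :: "nat set" and d :: int and v :: "int \<Rightarrow> nat \<Rightarrow> int"
  assumes "n = 2 * m + 1" and "n \<ge> 3"
    and "I \<subseteq> {0..m}" and "I \<noteq> {}"
    and "is_face n d I v"
  shows "\<forall>i\<in>I.
     (\<forall>j\<in>{1..i} \<union> {n + 1 - i..n}.
        d \<le> mu n v (int i) j + mu n v (int i) (n + 1 - j) \<and>
        mu n v (int i) j + mu n v (int i) (n + 1 - j) \<le> d + 1) \<and>
     (\<forall>j\<in>{i + 1..n - i}.
        d - 1 \<le> mu n v (int i) j + mu n v (int i) (n + 1 - j) \<and>
        mu n v (int i) j + mu n v (int i) (n + 1 - j) \<le> d)"
proof (intro ballI conjI)
  fix i j
  assume "i \<in> I"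
  then have i_idx: "int i \<in> idx_set n I" and i_small: "2 * i < n"
    using assms(1,3) by (auto intro: of_nat_mem_idx_set)
  have v_bounds: "d - 1 \<le> v (int i) j + v (int i) (n + 1 - j) \<and> v (int i) j + v (int i) (n + 1 - j) \<le> d"
    if "j \<in> {1..n}"
    using face_mirror_sum_bounds[OF assms(5) i_idx] i_small that by simp
  {
    assume j: "j \<in> {1..i} \<union> {n + 1 - i..n}"
    then have "j \<in> {1..n}" using i_small by auto
    with v_bounds omega_mirror_sum_outer[OF i_small j]
    show "d \<le> mu n v (int i) j + mu n v (int i) (n + 1 - j)"
      and "mu n v (int i) j + mu n v (int i) (n + 1 - j) \<le> d + 1"
      unfolding mu_def by linarith+
  next
    assume j: "j \<in> {i + 1..n - i}"
    then have "j \<in> {1..n}" by auto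
    with v_bounds omega_mirror_sum_inner[OF i_small j]
    show "d - 1 \<le> mu n v (int i) j + mu n v (int i) (n + 1 - j)"
      and "mu n v (int i) j + mu n v (int i) (n + 1 - j) \<le> d"
      unfolding mu_def by linarith+
  }
qed

end
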